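(* Let $F|R$ be an extension of ordered fields. If there is at least one non-ball cut in $R$ that is filled in $F$, then there exists no injective map $\mathcal C(R)\to\mathcal C(F)$ that is continuous with respect to the interval topologies and compatible with restriction.
   Context: For an ordered field $K$ with canonical valuation $v$ (valuation ring the convex hull of $\mathbb Z$), a cut is a pair $(D,E)$ with $D<E$ and $D\cup E=K$; $\mathcal C(K)$ is the set of cuts, ordered by $(D_1,E_1)<(D_2,E_2)$ iff $D_1\subsetneq D_2$. The interval topology on $\mathcal C(K)$ has basic open sets the intervals $(C_1,C_2)$, $(C_1,(K,\emptyset)]$ and $[(\emptyset,K),C_2)$. For $a\in K$ and a final segment $S$ of $vK$, $B_S(a,K)=\{b\in K\mid v(a-b)\in S\cup\{\infty\}\}$ is a ball. For nonempty $A\subseteq K$, $A^+=(D,K\setminus D)$ with $D$ the smallest initial segment containing $A$, and $A^-=(K\setminus E,E)$ with $E$ the smallest final segment containing $A$. A cut is a ball cut if it is $B^+$ or $B^-$ for some ball $B$, otherwise a non-ball cut. A cut $(D,E)$ of $R$ is filled in $F$ if some $a\in F$ satisfies $D<a<E$. The restriction of a cut $(D',E')$ of $F$ is $(D'\cap R,E'\cap R)$; a map $\tilde\iota:\mathcal C(R)\to\mathcal C(F)$ is compatible with restriction if the restriction of $\tilde\iota(C)$ is $C$ for every $C$. *)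

theory Defs
  imports "HOL-Analysis.Analysis"
begin

text \<open>The canonical valuation v has valuation ring the convex hull of the integers.
  We represent v(x) for x \<noteq> 0 by its archimedean class; v(0) = \<infinity> is represented by the
  empty set (which is exactly what arch_class 0 evaluates to).\<close>

definition arch_class :: "'a::linordered_field \<Rightarrow> 'a set" where
  "arch_class x = {y. y \<noteq> 0 \<and> (\<exists>n::nat. \<bar>y\<bar> \<le> of_nat n * \<bar>x\<bar>) \<and> (\<exists>n::nat. \<bar>x\<bar> \<le> of_nat n * \<bar>y\<bar>)}"

definition value_group :: "'a::linordered_field set set" where
  "value_group = arch_class ` (UNIV - {0})"

text \<open>Order on the value group: v(x) \<le> v(y) iff y/x lies in the valuation ring.\<close>
definition val_le :: "'a::linordered_field set \<Rightarrow> 'a set \<Rightarrow> bool" where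
  "val_le V W \<longleftrightarrow> (\<exists>x y. x \<noteq> 0 \<and> y \<noteq> 0 \<and> V = arch_class x \<and> W = arch_class y
                      \<and> (\<exists>n::nat. \<bar>y\<bar> \<le> of_nat n * \<bar>x\<bar>))"

definition final_segment :: "'a::linordered_field set set \<Rightarrow> bool" where
  "final_segment S \<longleftrightarrow> S \<subseteq> value_group \<and> (\<forall>s\<in>S. \<forall>t\<in>value_group. val_le s t \<longrightarrow> t \<in> S)"

definition ball_S :: "'a set set \<Rightarrow> 'a::linordered_field \<Rightarrow> 'a set" where
  "ball_S S a = {b. a - b = 0 \<or> arch_class (a - b) \<in> S}"

definition is_ball :: "'a::linordered_field set \<Rightarrow> bool" where
  "is_ball B \<longleftrightarrow> (\<exists>a S. final_segment S \<and> B = ball_S S a)"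

type_synonym 'a cut = "'a set \<times> 'a set"

definition cuts :: "'a::linordered_field cut set" where
  "cuts = {(D, E). (\<forall>d\<in>D. \<forall>e\<in>E. d < e) \<and> D \<union> E = UNIV}"

definition cut_less :: "'a::linordered_field cut \<Rightarrow> 'a cut \<Rightarrow> bool" where
  "cut_less C1 C2 \<longleftrightarrow> fst C1 \<subset> fst C2"

definition cut_topology :: "'a::linordered_field cut topology" where
  "cut_topology = topology_generated_by
     ({{C \<in> cuts. cut_less C1 C \<and> cut_less C C2} | C1 C2. C1 \<in> cuts \<and> C2 \<in> cuts}
      \<union> {{C \<in> cuts. cut_less C1 C} | C1. C1 \<in> cuts}
      \<union> {{C \<in> cuts. cut_less C C2} | C2. C2 \<in> cuts})"

definition upper_cut :: "'a::linordered_field set \<Rightarrow> 'a cut" where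
  "upper_cut A = (let D = {x. \<exists>a\<in>A. x \<le> a} in (D, UNIV - D))"

definition lower_cut :: "'a::linordered_field set \<Rightarrow> 'a cut" where
  "lower_cut A = (let E = {x. \<exists>a\<in>A. a \<le> x} in (UNIV - E, E))"

definition ball_cut :: "'a::linordered_field cut \<Rightarrow> bool" where
  "ball_cut C \<longleftrightarrow> (\<exists>B. is_ball B \<and> (C = upper_cut B \<or> C = lower_cut B))"

text \<open>F|R is given by an order-preserving field embedding i : R \<rightarrow> F.\<close>
definition ordered_field_embedding :: "('r::linordered_field \<Rightarrow> 'f::linordered_field) \<Rightarrow> bool" where
  "ordered_field_embedding i \<longleftrightarrow>
     (\<forall>x y. i (x + y) = i x + i y) \<and> (\<forall>x y. i (x * y) = i x * i y) \<and> i 1 = 1 \<and> strict_mono i"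

definition filled_in :: "('r::linordered_field \<Rightarrow> 'f::linordered_field) \<Rightarrow> 'r cut \<Rightarrow> bool" where
  "filled_in i C \<longleftrightarrow> (\<exists>a. (\<forall>d\<in>fst C. i d < a) \<and> (\<forall>e\<in>snd C. a < i e))"

definition restrict_cut :: "('r::linordered_field \<Rightarrow> 'f::linordered_field) \<Rightarrow> 'f cut \<Rightarrow> 'r cut" where
  "restrict_cut i C = (i -` fst C, i -` snd C)"

end

theory Submission
  imports Defs
begin

text \<open>Since {e}^+, {d}^- and UNIV^\<plusminus> are ball cuts, a non-ball cut C of R has two nonempty
  sides, the left one without a greatest and the right one without a least element; so C is
  approached from above by cuts {e}^+ and from below by cuts {d}^-. Let a \<in> F fill C and let
  \<iota> be continuous and compatible with restriction. Then \<iota>(C) lies below {a}^+ or above {a}^-.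
  In the first case continuity at C yields e > C with \<iota>({e}^+) < {a}^+, whereas compatibility
  with restriction puts i(e) into the left side of \<iota>({e}^+) although a < i(e). The second case
  is symmetric.\<close>

lemma cut_fst_less_snd: "C \<in> cuts \<Longrightarrow> x \<in> fst C \<Longrightarrow> y \<in> snd C \<Longrightarrow> x < y"
  by (cases C) (auto simp: cuts_def)

lemma cut_snd_iff: "C \<in> cuts \<Longrightarrow> y \<in> snd C \<longleftrightarrow> y \<notin> fst C"
  by (cases C) (force simp: cuts_def)

lemma cut_fst_downward: "C \<in> cuts \<Longrightarrow> y \<in> fst C \<Longrightarrow> x \<le> y \<Longrightarrow> x \<in> fst C"
  by (meson cut_fst_less_snd cut_snd_iff not_le)

lemma cuts_fst_linear: "C1 \<in> cuts \<Longrightarrow> C2 \<in> cuts \<Longrightarrow> fst C1 \<subseteq> fst C2 \<or> fst C2 \<subseteq> fst C1"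
  by (meson cut_fst_downward less_le_not_le nle_le subsetI)

lemma cut_less_trans: "cut_less A B \<Longrightarrow> cut_less B C \<Longrightarrow> cut_less A C"
  unfolding cut_less_def by (rule psubset_trans)

lemma upper_cut_singleton: "upper_cut {a} = ({x. x \<le> a}, {x. a < x})"
  by (auto simp: upper_cut_def Let_def)

lemma lower_cut_singleton: "lower_cut {a} = ({x. x < a}, {x. a \<le> x})"
  by (auto simp: lower_cut_def Let_def)

lemma upper_cut_singleton_in_cuts: "upper_cut {a} \<in> cuts"
  by (auto simp: upper_cut_singleton cuts_def)

lemma lower_cut_singleton_in_cuts: "lower_cut {a} \<in> cuts"
  by (auto simp: lower_cut_singleton cuts_def)

lemma cut_less_upper_cut_or_lower_cut_less:
  assumes "G \<in> cuts"
  shows "cut_less G (upper_cut {a}) \<or> cut_less (lower_cut {a}) G"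
proof (cases "\<forall>p \<in> fst G. p < a")
  case True
  then show ?thesis by (force simp: cut_less_def upper_cut_singleton)
next
  case False
  then obtain p where "p \<in> fst G" "a \<le> p" by force
  then show ?thesis
    using cut_fst_downward[OF assms] by (force simp: cut_less_def lower_cut_singleton)
qed

lemma is_ball_UNIV: "is_ball (UNIV :: 'a::linordered_field set)"
proof -
  have "ball_S value_group (0::'a) = UNIV"
    by (auto simp: ball_S_def value_group_def)
  then show ?thesis
    unfolding is_ball_def final_segment_def by blast
qed

lemma is_ball_singleton: "is_ball {a :: 'a::linordered_field}"
proof -
  have "ball_S {} a = {a}" by (auto simp: ball_S_def)
  then show ?thesis
    unfolding is_ball_def final_segment_def by blast
qed

lemma non_ball_cut_fst_nonempty:
  assumes "C \<in> cuts" "\<not> ball_cut C"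
  shows "fst C \<noteq> {}"
proof
  assume "fst C = {}"
  then have "C = lower_cut UNIV"
    using assms(1) by (cases C) (auto simp: lower_cut_def Let_def cuts_def)
  then show False using assms(2) is_ball_UNIV unfolding ball_cut_def by blast
qed

lemma non_ball_cut_snd_nonempty:
  assumes "C \<in> cuts" "\<not> ball_cut C"
  shows "snd C \<noteq> {}"
proof
  assume "snd C = {}"
  then have "C = upper_cut UNIV"
    using assms(1) by (cases C) (auto simp: upper_cut_def Let_def cuts_def)
  then show False using assms(2) is_ball_UNIV unfolding ball_cut_def by blast
qed

lemma non_ball_cut_fst_no_greatest:
  assumes "C \<in> cuts" "\<not> ball_cut C" "d \<in> fst C"
  obtains d' where "d' \<in> fst C" "d < d'"
proof (rule ccontr)
  assume "\<not> thesis"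
  with that have "\<forall>x \<in> fst C. x \<le> d" by (meson not_le)
  with assms(1,3) have "fst C = {x. x \<le> d}"
    using cut_fst_downward by blast
  with assms(1) have "C = upper_cut {d}"
    by (auto simp: upper_cut_singleton prod_eq_iff cut_snd_iff)
  then show False using assms(2) is_ball_singleton unfolding ball_cut_def by blast
qed

lemma non_ball_cut_snd_no_least:
  assumes "C \<in> cuts" "\<not> ball_cut C" "e \<in> snd C"
  obtains e' where "e' \<in> snd C" "e' < e"
proof (rule ccontr)
  assume "\<not> thesis"
  with that have "\<forall>x \<in> snd C. e \<le> x" by (meson not_le)
  with assms(1,3) have "snd C = {x. e \<le> x}"
    using cut_fst_less_snd cut_snd_iff by fastforce
  moreover from this assms(1) have "fst C = {x. x < e}"
    using cut_snd_iff not_le by blast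
  ultimately have "C = lower_cut {e}"
    by (simp add: lower_cut_singleton prod_eq_iff)
  then show False using assms(2) is_ball_singleton unfolding ball_cut_def by blast
qed

lemma non_ball_cut_upper_cut_between:
  assumes "C \<in> cuts" "\<not> ball_cut C" "C2 \<in> cuts" "cut_less C C2"
  obtains e where "e \<in> snd C" "cut_less C (upper_cut {e})" "cut_less (upper_cut {e}) C2"
proof -
  from assms(1,4) obtain e0 where e0: "e0 \<in> fst C2" "e0 \<in> snd C"
    unfolding cut_less_def by (auto simp: cut_snd_iff)
  then obtain e where e: "e \<in> snd C" "e < e0"
    using non_ball_cut_snd_no_least[OF assms(1,2)] by blast
  have "cut_less C (upper_cut {e})"
    using e(1) cut_fst_less_snd[OF assms(1) _ e(1)] cut_snd_iff[OF assms(1)]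
    by (force simp: cut_less_def upper_cut_singleton)
  moreover have "cut_less (upper_cut {e}) C2"
    using e(2) e0(1) cut_fst_downward[OF assms(3) e0(1)]
    by (force simp: cut_less_def upper_cut_singleton)
  ultimately show thesis using that e(1) by blast
qed

lemma non_ball_cut_lower_cut_between:
  assumes "C \<in> cuts" "\<not> ball_cut C" "C1 \<in> cuts" "cut_less C1 C"
  obtains d where "d \<in> fst C" "cut_less C1 (lower_cut {d})" "cut_less (lower_cut {d}) C"
proof -
  from assms(4) obtain d0 where d0: "d0 \<in> fst C" "d0 \<in> snd C1"
    unfolding cut_less_def by (auto simp: cut_snd_iff[OF assms(3)])
  then obtain d where d: "d \<in> fst C" "d0 < d"
    using non_ball_cut_fst_no_greatest[OF assms(1,2)] by blast
  have "cut_less C1 (lower_cut {d})"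
    using d(2) d0 cut_fst_less_snd[OF assms(3) _ d0(2)] cut_snd_iff[OF assms(3)]
    by (force simp: cut_less_def lower_cut_singleton)
  moreover have "cut_less (lower_cut {d}) C"
    using d(1) cut_fst_downward[OF assms(1) d(1)]
    by (force simp: cut_less_def lower_cut_singleton)
  ultimately show thesis using that d(1) by blast
qed

abbreviation cut_interval :: "'a::linordered_field cut \<Rightarrow> 'a cut \<Rightarrow> 'a cut set" where
  "cut_interval C1 C2 \<equiv> {C \<in> cuts. cut_less C1 C \<and> cut_less C C2}"

lemma topspace_cut_topology: "topspace (cut_topology :: 'a::linordered_field cut topology) = cuts"
proof -
  have "C \<in> {C' \<in> cuts. cut_less C' (UNIV, {})} \<or> C \<in> {C' \<in> cuts. cut_less ({}, UNIV) C'}"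
    if "C \<in> cuts" for C :: "'a cut"
    using that by (cases C) (auto simp: cut_less_def cuts_def)
  moreover have "({}, UNIV) \<in> (cuts :: 'a cut set)" "(UNIV, {}) \<in> (cuts :: 'a cut set)"
    by (simp_all add: cuts_def)
  ultimately show ?thesis
    unfolding cut_topology_def topology_generated_by_topspace by blast
qed

lemma openin_cut_less_left: "A \<in> cuts \<Longrightarrow> openin cut_topology {C \<in> cuts. cut_less C A}"
  unfolding cut_topology_def by (rule topology_generated_by_Basis) blast

lemma openin_cut_less_right: "A \<in> cuts \<Longrightarrow> openin cut_topology {C \<in> cuts. cut_less A C}"
  unfolding cut_topology_def by (rule topology_generated_by_Basis) blast

lemma cut_interval_mono:
  "fst A1 \<subseteq> fst C1 \<Longrightarrow> fst C2 \<subseteq> fst A2 \<Longrightarrow>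
    cut_interval C1 C2 \<subseteq> cut_interval A1 A2"
  unfolding cut_less_def by blast

lemma openin_cut_topology_interval_nhd:
  assumes "openin cut_topology U" "C \<in> U" "fst C \<noteq> {}" "snd C \<noteq> {}"
  shows "\<exists>C1\<in>cuts. \<exists>C2\<in>cuts. cut_less C1 C \<and> cut_less C C2
           \<and> cut_interval C1 C2 \<subseteq> U"
  using assms(1)[unfolded cut_topology_def openin_topology_generated_by_iff] assms(2-)
proof (induction arbitrary: C)
  case Empty
  then show ?case by simp
next
  case (Int a b)
  obtain A1 A2 where A: "A1 \<in> cuts" "A2 \<in> cuts" "cut_less A1 C" "cut_less C A2"
      "cut_interval A1 A2 \<subseteq> a"
    using Int.IH(1)[of C] Int.prems by blast
  obtain B1 B2 where B: "B1 \<in> cuts" "B2 \<in> cuts" "cut_less B1 C" "cut_less C B2"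
      "cut_interval B1 B2 \<subseteq> b"
    using Int.IH(2)[of C] Int.prems by blast
  obtain C1 where C1: "C1 \<in> {A1, B1}" "fst A1 \<subseteq> fst C1" "fst B1 \<subseteq> fst C1"
    using cuts_fst_linear[OF A(1) B(1)] by blast
  obtain C2 where C2: "C2 \<in> {A2, B2}" "fst C2 \<subseteq> fst A2" "fst C2 \<subseteq> fst B2"
    using cuts_fst_linear[OF A(2) B(2)] by blast
  have "cut_interval C1 C2 \<subseteq> a \<inter> b"
    using cut_interval_mono[OF C1(2) C2(2)] cut_interval_mono[OF C1(3) C2(3)] A(5) B(5) by blast
  moreover have "C1 \<in> cuts" "cut_less C1 C" "C2 \<in> cuts" "cut_less C C2"
    using A B C1(1) C2(1) by auto
  ultimately show ?case by blast
next
  case (UN K)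
  then obtain k where "k \<in> K" "C \<in> k" by blast
  with UN.IH UN.prems show ?case by blast
next
  case (Basis s)
  have C: "C \<in> cuts"
    using Basis.hyps Basis.prems(1) by blast
  have bot: "({}, UNIV) \<in> cuts" "cut_less ({}, UNIV) C"
    using Basis.prems(2) by (auto simp: cuts_def cut_less_def)
  have top: "(UNIV, {}) \<in> cuts" "cut_less C (UNIV, {})"
    using Basis.prems(3) cut_snd_iff[OF C] by (auto simp: cuts_def cut_less_def)
  from Basis.hyps consider
      (interval) C1 C2 where "s = cut_interval C1 C2" "C1 \<in> cuts" "C2 \<in> cuts"
    | (above) C1 where "s = {C \<in> cuts. cut_less C1 C}" "C1 \<in> cuts"
    | (below) C2 where "s = {C \<in> cuts. cut_less C C2}" "C2 \<in> cuts"
    by blast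
  then show ?case
  proof cases
    case interval
    with Basis.prems(1) show ?thesis by blast
  next
    case above
    with Basis.prems(1) top show ?thesis by blast
  next
    case below
    with Basis.prems(1) bot show ?thesis by blast
  qed
qed

lemma continuous_map_cut_topology_in_cuts:
  "continuous_map cut_topology cut_topology f \<Longrightarrow> C \<in> cuts \<Longrightarrow> f C \<in> cuts"
  using continuous_map_image_subset_topspace by (fastforce simp: topspace_cut_topology)

lemma continuous_map_cut_interval:
  assumes "continuous_map cut_topology cut_topology f" "openin cut_topology V"
    and "C \<in> cuts" "f C \<in> V" "fst C \<noteq> {}" "snd C \<noteq> {}"
  obtains C1 C2 where "C1 \<in> cuts" "C2 \<in> cuts" "cut_less C1 C" "cut_less C C2"
    "\<And>C'. C' \<in> cuts \<Longrightarrow> cut_less C1 C' \<Longrightarrow> cut_less C' C2 \<Longrightarrow> f C' \<in> V"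
proof -
  have "openin cut_topology {C' \<in> cuts. f C' \<in> V}"
    using openin_continuous_map_preimage[OF assms(1,2)] by (simp add: topspace_cut_topology)
  then obtain C1 C2 where "C1 \<in> cuts" "C2 \<in> cuts" "cut_less C1 C" "cut_less C C2"
    and "cut_interval C1 C2 \<subseteq> {C' \<in> cuts. f C' \<in> V}"
    using openin_cut_topology_interval_nhd assms(3-) by blast
  then show thesis by (intro that) auto
qed

lemma restrict_cut_fst_iff: "restrict_cut i G = C \<Longrightarrow> i x \<in> fst G \<longleftrightarrow> x \<in> fst C"
  by (auto simp: restrict_cut_def)

lemma restrict_cut_snd_iff: "restrict_cut i G = C \<Longrightarrow> i x \<in> snd G \<longleftrightarrow> x \<in> snd C"
  by (auto simp: restrict_cut_def)

lemma continuous_restrict_not_less_upper_cut: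
  assumes "continuous_map cut_topology cut_topology f"
    and "\<forall>C \<in> cuts. restrict_cut i (f C) = C"
    and "C \<in> cuts" "\<not> ball_cut C" "\<forall>e \<in> snd C. a < i e"
  shows "\<not> cut_less (f C) (upper_cut {a})"
proof
  let ?V = "{G \<in> cuts. cut_less G (upper_cut {a})}"
  assume "cut_less (f C) (upper_cut {a})"
  with continuous_map_cut_topology_in_cuts[OF assms(1,3)] have "f C \<in> ?V" by blast
  then obtain C1 C2 where C12: "C1 \<in> cuts" "C2 \<in> cuts" "cut_less C1 C" "cut_less C C2"
    and image: "\<And>C'. C' \<in> cuts \<Longrightarrow> cut_less C1 C' \<Longrightarrow> cut_less C' C2 \<Longrightarrow> f C' \<in> ?V"
    using continuous_map_cut_interval[OF assms(1) openin_cut_less_left[OF upper_cut_singleton_in_cuts]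
      assms(3) _ non_ball_cut_fst_nonempty[OF assms(3,4)] non_ball_cut_snd_nonempty[OF assms(3,4)]]
    by blast
  obtain e where e: "e \<in> snd C" "cut_less C (upper_cut {e})" "cut_less (upper_cut {e}) C2"
    using non_ball_cut_upper_cut_between[OF assms(3,4) C12(2,4)] by blast
  have "fst (f (upper_cut {e})) \<subseteq> {x. x \<le> a}"
    using image[OF upper_cut_singleton_in_cuts cut_less_trans[OF C12(3) e(2)] e(3)]
    by (auto simp: cut_less_def upper_cut_singleton)
  moreover have "i e \<in> fst (f (upper_cut {e}))"
    using restrict_cut_fst_iff[OF assms(2)[rule_format, OF upper_cut_singleton_in_cuts]]
    by (simp add: upper_cut_singleton)
  ultimately show False using assms(5) e(1) by fastforce
qed

lemma continuous_restrict_not_lower_cut_less: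
  assumes "continuous_map cut_topology cut_topology f"
    and "\<forall>C \<in> cuts. restrict_cut i (f C) = C"
    and "C \<in> cuts" "\<not> ball_cut C" "\<forall>d \<in> fst C. i d < a"
  shows "\<not> cut_less (lower_cut {a}) (f C)"
proof
  let ?V = "{G \<in> cuts. cut_less (lower_cut {a}) G}"
  assume "cut_less (lower_cut {a}) (f C)"
  with continuous_map_cut_topology_in_cuts[OF assms(1,3)] have "f C \<in> ?V" by blast
  then obtain C1 C2 where C12: "C1 \<in> cuts" "C2 \<in> cuts" "cut_less C1 C" "cut_less C C2"
    and image: "\<And>C'. C' \<in> cuts \<Longrightarrow> cut_less C1 C' \<Longrightarrow> cut_less C' C2 \<Longrightarrow> f C' \<in> ?V"
    using continuous_map_cut_interval[OF assms(1) openin_cut_less_right[OF lower_cut_singleton_in_cuts]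
      assms(3) _ non_ball_cut_fst_nonempty[OF assms(3,4)] non_ball_cut_snd_nonempty[OF assms(3,4)]]
    by blast
  obtain d where d: "d \<in> fst C" "cut_less C1 (lower_cut {d})" "cut_less (lower_cut {d}) C"
    using non_ball_cut_lower_cut_between[OF assms(3,4) C12(1,3)] by blast
  have fd: "f (lower_cut {d}) \<in> ?V"
    using image[OF lower_cut_singleton_in_cuts d(2) cut_less_trans[OF d(3) C12(4)]] .
  then have "i d \<in> fst (f (lower_cut {d}))"
    using assms(5) d(1) by (auto simp: cut_less_def lower_cut_singleton)
  moreover have "i d \<in> snd (f (lower_cut {d}))"
    using restrict_cut_snd_iff[OF assms(2)[rule_format, OF lower_cut_singleton_in_cuts]]
    by (simp add: lower_cut_singleton)
  ultimately show False using fd cut_snd_iff by blast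
qed

theorem proposition4p7:
  fixes i :: "'r::linordered_field \<Rightarrow> 'f::linordered_field"
  assumes "ordered_field_embedding i"
    and "\<exists>C \<in> cuts. \<not> ball_cut C \<and> filled_in i C"
  shows "\<not> (\<exists>\<iota>. inj_on \<iota> (cuts :: 'r cut set)
              \<and> continuous_map (cut_topology :: 'r cut topology) (cut_topology :: 'f cut topology) \<iota>
              \<and> (\<forall>C \<in> cuts. restrict_cut i (\<iota> C) = C))"
proof
  assume "\<exists>\<iota>. inj_on \<iota> (cuts :: 'r cut set)
              \<and> continuous_map (cut_topology :: 'r cut topology) (cut_topology :: 'f cut topology) \<iota>
              \<and> (\<forall>C \<in> cuts. restrict_cut i (\<iota> C) = C)"
  then obtain f :: "'r cut \<Rightarrow> 'f cut" where cont: "continuous_map cut_topology cut_topology f"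
    and res: "\<forall>C \<in> cuts. restrict_cut i (f C) = C" by blast
  obtain C :: "'r cut" where C: "C \<in> cuts" "\<not> ball_cut C" and "filled_in i C"
    using assms(2) by blast
  then obtain a where a: "\<forall>d \<in> fst C. i d < a" "\<forall>e \<in> snd C. a < i e"
    unfolding filled_in_def by blast
  have "f C \<in> cuts"
    using continuous_map_cut_topology_in_cuts[OF cont C(1)] .
  then show False
    using cut_less_upper_cut_or_lower_cut_less continuous_restrict_not_less_upper_cut[OF cont res C a(2)]
      continuous_restrict_not_lower_cut_less[OF cont res C a(1)] by blast
qed

end
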